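(* Let $(\mathscr{C}_1,T_1)$ and $(\mathscr{C}_2,T_2)$ be sites and $\mathscr{F}:\mathscr{C}_1\to\mathscr{C}_2$ a functor that sends $T_1$-coverings to $T_2$-coverings (i.e. $(\mathscr{F}(\pi_i))_i$ is a $T_2$-covering whenever $(\pi_i)_i$ is a $T_1$-covering), sends universal morphisms to universal morphisms, and preserves fibre products with universal morphisms. Then $\mathscr{F}$ is continuous.
   Context: A Grothendieck topology $T$ on $\mathscr{C}$ assigns to each object $X$ a set of families $(\pi_i:U_i\to X)_{i\in I}$ ("coverings") such that isomorphisms form singleton coverings, coverings of members of a covering compose to coverings, and coverings pull back (pullbacks existing) along arbitrary morphisms to coverings; a site is a category with such a topology. A morphism is universal if its pullback along every morphism exists. A morphism $\pi:Y\to X$ is $T$-locally split if there is a covering $(\pi_i:U_i\to X)$ and morphisms $\rho_i:U_i\to Y$ with $\pi\circ\rho_i=\pi_i$. A functor $\mathscr{F}:(\mathscr{C}_1,T_1)\to(\mathscr{C}_2,T_2)$ is continuous if (i) it sends universal $T_1$-locally split morphisms to universal $T_2$-locally split morphisms, and (ii) it preserves fibre products with universal $T_1$-locally split morphisms. *)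

theory Defs
  imports Main
begin

text \<open>Small categories given by object set, morphism set, domain, codomain,
identities and composition. Comp C g f is the composite g after f.\<close>

record ('o, 'm) cat =
  Obj :: "'o set"
  Mor :: "'m set"
  Dom :: "'m \<Rightarrow> 'o"
  Cod :: "'m \<Rightarrow> 'o"
  Id  :: "'o \<Rightarrow> 'm"
  Comp :: "'m \<Rightarrow> 'm \<Rightarrow> 'm"

definition hom :: "('o,'m) cat \<Rightarrow> 'm \<Rightarrow> 'o \<Rightarrow> 'o \<Rightarrow> bool" where
  "hom C f X Y \<longleftrightarrow> f \<in> Mor C \<and> Dom C f = X \<and> Cod C f = Y"

definition category :: "('o,'m) cat \<Rightarrow> bool" where
  "category C \<longleftrightarrow>
     (\<forall>f \<in> Mor C. Dom C f \<in> Obj C \<and> Cod C f \<in> Obj C) \<and>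
     (\<forall>X \<in> Obj C. hom C (Id C X) X X) \<and>
     (\<forall>f \<in> Mor C. \<forall>g \<in> Mor C. Cod C f = Dom C g \<longrightarrow> hom C (Comp C g f) (Dom C f) (Cod C g)) \<and>
     (\<forall>f \<in> Mor C. \<forall>g \<in> Mor C. \<forall>h \<in> Mor C. Cod C f = Dom C g \<longrightarrow> Cod C g = Dom C h \<longrightarrow>
         Comp C h (Comp C g f) = Comp C (Comp C h g) f) \<and>
     (\<forall>f \<in> Mor C. Comp C f (Id C (Dom C f)) = f \<and> Comp C (Id C (Cod C f)) f = f)"

definition iso :: "('o,'m) cat \<Rightarrow> 'm \<Rightarrow> bool" where
  "iso C f \<longleftrightarrow> f \<in> Mor C \<and> (\<exists>g. hom C g (Cod C f) (Dom C f) \<and>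
      Comp C g f = Id C (Dom C f) \<and> Comp C f g = Id C (Cod C f))"

definition is_pullback :: "('o,'m) cat \<Rightarrow> 'm \<Rightarrow> 'm \<Rightarrow> 'm \<Rightarrow> 'm \<Rightarrow> bool" where
  "is_pullback C f g p q \<longleftrightarrow>
     f \<in> Mor C \<and> g \<in> Mor C \<and> p \<in> Mor C \<and> q \<in> Mor C \<and>
     Cod C f = Cod C g \<and> Dom C p = Dom C q \<and> Cod C p = Dom C f \<and> Cod C q = Dom C g \<and>
     Comp C f p = Comp C g q \<and>
     (\<forall>W a b. hom C a W (Dom C f) \<longrightarrow> hom C b W (Dom C g) \<longrightarrow> Comp C f a = Comp C g b \<longrightarrow>
        (\<exists>!h. hom C h W (Dom C p) \<and> Comp C p h = a \<and> Comp C q h = b))"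

definition has_pullback :: "('o,'m) cat \<Rightarrow> 'm \<Rightarrow> 'm \<Rightarrow> bool" where
  "has_pullback C f g \<longleftrightarrow> (\<exists>p q. is_pullback C f g p q)"

definition universal :: "('o,'m) cat \<Rightarrow> 'm \<Rightarrow> bool" where
  "universal C f \<longleftrightarrow> f \<in> Mor C \<and>
     (\<forall>g \<in> Mor C. Cod C g = Cod C f \<longrightarrow> has_pullback C f g)"

text \<open>A topology assigns to each object X a set of coverings; a covering of X is
 represented as a set of morphisms with codomain X.\<close>
definition site :: "('o,'m) cat \<Rightarrow> ('o \<Rightarrow> 'm set set) \<Rightarrow> bool" where
  "site C Cov \<longleftrightarrow> category C \<and>
     (\<forall>X U. U \<in> Cov X \<longrightarrow> X \<in> Obj C \<and> U \<subseteq> Mor C \<and> (\<forall>u \<in> U. Cod C u = X)) \<and>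
     (\<forall>f. iso C f \<longrightarrow> {f} \<in> Cov (Cod C f)) \<and>
     (\<forall>X U V. U \<in> Cov X \<longrightarrow> (\<forall>u \<in> U. V u \<in> Cov (Dom C u)) \<longrightarrow>
        {Comp C u v | u v. u \<in> U \<and> v \<in> V u} \<in> Cov X) \<and>
     (\<forall>X U f. U \<in> Cov X \<longrightarrow> f \<in> Mor C \<longrightarrow> Cod C f = X \<longrightarrow>
        (\<forall>u \<in> U. has_pullback C u f) \<longrightarrow>
        (\<forall>p q. (\<forall>u \<in> U. is_pullback C u f (p u) (q u)) \<longrightarrow> q ` U \<in> Cov (Dom C f)))"

definition is_functor :: "('o1,'m1) cat \<Rightarrow> ('o2,'m2) cat \<Rightarrow> ('o1 \<Rightarrow> 'o2) \<Rightarrow> ('m1 \<Rightarrow> 'm2) \<Rightarrow> bool" where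
  "is_functor C D Fo Fm \<longleftrightarrow>
     (\<forall>X \<in> Obj C. Fo X \<in> Obj D) \<and>
     (\<forall>f \<in> Mor C. hom D (Fm f) (Fo (Dom C f)) (Fo (Cod C f))) \<and>
     (\<forall>X \<in> Obj C. Fm (Id C X) = Id D (Fo X)) \<and>
     (\<forall>f \<in> Mor C. \<forall>g \<in> Mor C. Cod C f = Dom C g \<longrightarrow> Fm (Comp C g f) = Comp D (Fm g) (Fm f))"

definition locally_split :: "('o,'m) cat \<Rightarrow> ('o \<Rightarrow> 'm set set) \<Rightarrow> 'm \<Rightarrow> bool" where
  "locally_split C Cov \<pi> \<longleftrightarrow> \<pi> \<in> Mor C \<and>
     (\<exists>U \<in> Cov (Cod C \<pi>). \<forall>u \<in> U. \<exists>\<rho>. hom C \<rho> (Dom C u) (Dom C \<pi>) \<and> Comp C \<pi> \<rho> = u)"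

definition preserves_fibre_products_with ::
  "('o1,'m1) cat \<Rightarrow> ('o2,'m2) cat \<Rightarrow> ('m1 \<Rightarrow> 'm2) \<Rightarrow> ('m1 \<Rightarrow> bool) \<Rightarrow> bool" where
  "preserves_fibre_products_with C D Fm P \<longleftrightarrow>
     (\<forall>\<pi> g p q. P \<pi> \<longrightarrow> is_pullback C \<pi> g p q \<longrightarrow> is_pullback D (Fm \<pi>) (Fm g) (Fm p) (Fm q))"

definition continuous_functor ::
  "('o1,'m1) cat \<Rightarrow> ('o1 \<Rightarrow> 'm1 set set) \<Rightarrow> ('o2,'m2) cat \<Rightarrow> ('o2 \<Rightarrow> 'm2 set set) \<Rightarrow> ('m1 \<Rightarrow> 'm2) \<Rightarrow> bool" where
  "continuous_functor C T1 D T2 Fm \<longleftrightarrow>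
     (\<forall>\<pi>. universal C \<pi> \<and> locally_split C T1 \<pi> \<longrightarrow> universal D (Fm \<pi>) \<and> locally_split D T2 (Fm \<pi>)) \<and>
     preserves_fibre_products_with C D Fm (\<lambda>\<pi>. universal C \<pi> \<and> locally_split C T1 \<pi>)"

end

theory Submission
  imports Defs
begin

text \<open>Functoriality carries a covering that splits \<pi> locally, together with its local
  sections, to the image covering and the image sections; universal locally split morphisms
  are in particular universal, so preservation of their fibre products is a special case of
  the hypothesis.\<close>

lemma functor_hom:
  assumes "is_functor C D Fo Fm" and "hom C f X Y"
  shows "hom D (Fm f) (Fo X) (Fo Y)"
  using assms unfolding is_functor_def hom_def by auto

lemma functor_comp:
  assumes "is_functor C D Fo Fm" and "f \<in> Mor C" and "g \<in> Mor C" and "Cod C f = Dom C g"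
  shows "Fm (Comp C g f) = Comp D (Fm g) (Fm f)"
  using assms unfolding is_functor_def by auto

lemma site_covering_hom:
  assumes "site C Cov" and "U \<in> Cov X" and "u \<in> U"
  shows "hom C u (Dom C u) X"
proof -
  have "\<forall>X U. U \<in> Cov X \<longrightarrow> X \<in> Obj C \<and> U \<subseteq> Mor C \<and> (\<forall>u \<in> U. Cod C u = X)"
    using assms(1) unfolding site_def by (elim conjE)
  then show ?thesis
    using assms(2,3) unfolding hom_def by blast
qed

lemma functor_preserves_locally_split:
  assumes "site C1 T1" and F: "is_functor C1 C2 Fo Fm"
    and covers: "\<forall>X U. U \<in> T1 X \<longrightarrow> Fm ` U \<in> T2 (Fo X)"
    and "locally_split C1 T1 \<pi>"
  shows "locally_split C2 T2 (Fm \<pi>)"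
proof -
  obtain U where "\<pi> \<in> Mor C1" and U: "U \<in> T1 (Cod C1 \<pi>)"
    and lift: "\<forall>u \<in> U. \<exists>\<rho>. hom C1 \<rho> (Dom C1 u) (Dom C1 \<pi>) \<and> Comp C1 \<pi> \<rho> = u"
    using assms(4) unfolding locally_split_def by blast
  then have F\<pi>: "hom C2 (Fm \<pi>) (Fo (Dom C1 \<pi>)) (Fo (Cod C1 \<pi>))"
    using functor_hom[OF F] by (simp add: hom_def)
  have lifts: "\<exists>\<sigma>. hom C2 \<sigma> (Dom C2 v) (Dom C2 (Fm \<pi>)) \<and> Comp C2 (Fm \<pi>) \<sigma> = v"
    if "v \<in> Fm ` U" for v
  proof -
    obtain u where u: "u \<in> U" "v = Fm u" using \<open>v \<in> Fm ` U\<close> by blast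
    obtain \<rho> where \<rho>: "hom C1 \<rho> (Dom C1 u) (Dom C1 \<pi>)" "Comp C1 \<pi> \<rho> = u"
      using lift u by blast
    have "Dom C2 v = Fo (Dom C1 u)"
      using functor_hom[OF F site_covering_hom[OF assms(1) U u(1)]] u(2) by (simp add: hom_def)
    moreover have "Comp C2 (Fm \<pi>) (Fm \<rho>) = v"
      using functor_comp[OF F, of \<rho> \<pi>] \<rho> \<open>\<pi> \<in> Mor C1\<close> u(2) by (simp add: hom_def)
    ultimately show ?thesis
      using functor_hom[OF F \<rho>(1)] F\<pi> by (intro exI[of _ "Fm \<rho>"]) (simp add: hom_def)
  qed
  moreover have "Fm \<pi> \<in> Mor C2"
    using F\<pi> by (simp add: hom_def)
  moreover have "Fm ` U \<in> T2 (Cod C2 (Fm \<pi>))"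
    using covers U F\<pi> by (simp add: hom_def)
  ultimately show ?thesis
    unfolding locally_split_def by blast
qed

lemma preserves_fibre_products_with_mono:
  assumes "preserves_fibre_products_with C D Fm Q" and "\<And>\<pi>. P \<pi> \<Longrightarrow> Q \<pi>"
  shows "preserves_fibre_products_with C D Fm P"
  using assms unfolding preserves_fibre_products_with_def by blast

theorem mainTheorem10:
  fixes C1 :: "('o1,'m1) cat" and T1 :: "'o1 \<Rightarrow> 'm1 set set"
    and C2 :: "('o2,'m2) cat" and T2 :: "'o2 \<Rightarrow> 'm2 set set"
    and Fo :: "'o1 \<Rightarrow> 'o2" and Fm :: "'m1 \<Rightarrow> 'm2"
  assumes "site C1 T1" and "site C2 T2"
    and "is_functor C1 C2 Fo Fm"
    and "\<forall>X U. U \<in> T1 X \<longrightarrow> Fm ` U \<in> T2 (Fo X)"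
    and "\<forall>\<pi>. universal C1 \<pi> \<longrightarrow> universal C2 (Fm \<pi>)"
    and "preserves_fibre_products_with C1 C2 Fm (universal C1)"
  shows "continuous_functor C1 T1 C2 T2 Fm"
  unfolding continuous_functor_def
proof (rule conjI, intro allI impI)
  fix \<pi> assume "universal C1 \<pi> \<and> locally_split C1 T1 \<pi>"
  then show "universal C2 (Fm \<pi>) \<and> locally_split C2 T2 (Fm \<pi>)"
    using assms(5) functor_preserves_locally_split[OF assms(1,3,4)] by simp
next
  show "preserves_fibre_products_with C1 C2 Fm (\<lambda>\<pi>. universal C1 \<pi> \<and> locally_split C1 T1 \<pi>)"
    using assms(6) by (rule preserves_fibre_products_with_mono) simp
qed

end
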